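(* Let $p$ be an odd prime, $n\ge2$ an integer, and $\mu_{p^n}$ a primitive $p^n$-th root of unity. Then in $\mathbb{Z}[\mu_{p^n}]$, \[ (1-\mu_{p^n})^{p^n-p^{n-1}}\equiv -p \pmod{(1-\mu_{p^n})^{p^n}}. \] *)

theory Defs
  imports Complex_Main "HOL-Computational_Algebra.Polynomial"
begin

definition primitive_root_of_unity :: "nat \<Rightarrow> complex \<Rightarrow> bool" where
  "primitive_root_of_unity m z \<longleftrightarrow> m > 0 \<and> z ^ m = 1 \<and> (\<forall>k. 0 < k \<and> k < m \<longrightarrow> z ^ k \<noteq> 1)"

definition int_adjoin :: "complex \<Rightarrow> complex set" where
  "int_adjoin z = {poly (map_poly of_int q) z | q :: int poly. True}"

definition cong_in_int_adjoin :: "complex \<Rightarrow> complex \<Rightarrow> complex \<Rightarrow> complex \<Rightarrow> bool" where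
  "cong_in_int_adjoin z a b m \<longleftrightarrow> (\<exists>x \<in> int_adjoin z. a - b = m * x)"

end

theory Submission
  imports Defs
begin

text \<open>
  Put \<open>\<pi> = 1 - \<mu>\<close>, \<open>m = p^(n-1)\<close> and \<open>T = \<mu>^m - 1\<close>, so that \<open>T + 1\<close> is a primitive
  \<open>p\<close>-th root of unity. The congruence \<open>(a + b)^(p^j) \<equiv> a^(p^j) + b^(p^j) mod p a b\<close> gives
  \<open>T = -\<pi>^m + p \<pi> B\<close>. From \<open>(T + 1)^p = 1\<close> and \<open>T \<noteq> 0\<close> one gets \<open>T^(p-1) = -p (1 + T w)\<close>,
  and since \<open>p - 1\<close> is even, \<open>(T w)^(p-1)\<close> is a multiple of \<open>p (1 + T w)\<close>, which makes
  \<open>1 + T w\<close> a unit; so \<open>p\<close> and \<open>T^(p-1)\<close> are associates. Feeding divisibility of \<open>p\<close> by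
  powers of \<open>\<pi>\<close> back into \<open>T = -\<pi>^m + p \<pi> B\<close> shows that \<open>\<pi>^(m(p-1))\<close> divides \<open>p\<close>.
  Finally, expanding \<open>T^(p-1) = (p \<pi> B - \<pi>^m)^(p-1)\<close> to first order in \<open>p \<pi> B\<close> writes
  \<open>\<pi>^(m(p-1)) + p\<close> as a multiple of \<open>p \<pi>^m\<close>, hence of \<open>\<pi>^(pm)\<close>.
\<close>

lemma map_poly_of_int_add:
  "map_poly (of_int :: int \<Rightarrow> 'a::comm_ring_1) (q + r) = map_poly of_int q + map_poly of_int r"
  by (rule poly_eqI) (simp add: coeff_map_poly)

lemma map_poly_of_int_mult:
  "map_poly (of_int :: int \<Rightarrow> 'a::comm_ring_1) (q * r) = map_poly of_int q * map_poly of_int r"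
  by (rule poly_eqI) (simp add: coeff_map_poly coeff_mult)

lemma map_poly_of_int_uminus:
  "map_poly (of_int :: int \<Rightarrow> 'a::comm_ring_1) (- q) = - map_poly of_int q"
  by (rule poly_eqI) (simp add: coeff_map_poly)

lemma int_adjoin_of_int: "of_int c \<in> int_adjoin z"
  unfolding int_adjoin_def by (auto intro!: exI[of _ "[:c:]"] simp: map_poly_pCons)

lemma int_adjoin_of_nat: "of_nat c \<in> int_adjoin z"
  using int_adjoin_of_int[of "int c" z] by simp

lemma int_adjoin_numeral: "numeral k \<in> int_adjoin z"
  using int_adjoin_of_nat[of "numeral k" z] by simp

lemma int_adjoin_0: "0 \<in> int_adjoin z"
  using int_adjoin_of_int[of 0 z] by simp

lemma int_adjoin_1: "1 \<in> int_adjoin z"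
  using int_adjoin_of_int[of 1 z] by simp

lemma int_adjoin_self: "z \<in> int_adjoin z"
  unfolding int_adjoin_def by (auto intro!: exI[of _ "[:0, 1:]"] simp: map_poly_pCons)

lemma int_adjoin_add: "a \<in> int_adjoin z \<Longrightarrow> b \<in> int_adjoin z \<Longrightarrow> a + b \<in> int_adjoin z"
  unfolding int_adjoin_def by (auto simp flip: poly_add map_poly_of_int_add)

lemma int_adjoin_mult: "a \<in> int_adjoin z \<Longrightarrow> b \<in> int_adjoin z \<Longrightarrow> a * b \<in> int_adjoin z"
  unfolding int_adjoin_def by (auto simp flip: poly_mult map_poly_of_int_mult)

lemma int_adjoin_uminus: "a \<in> int_adjoin z \<Longrightarrow> - a \<in> int_adjoin z"
  unfolding int_adjoin_def by (auto simp flip: poly_minus map_poly_of_int_uminus)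

lemma int_adjoin_diff: "a \<in> int_adjoin z \<Longrightarrow> b \<in> int_adjoin z \<Longrightarrow> a - b \<in> int_adjoin z"
  using int_adjoin_add[of a z "- b"] int_adjoin_uminus[of b z] by simp

lemma int_adjoin_power: "a \<in> int_adjoin z \<Longrightarrow> a ^ k \<in> int_adjoin z"
  by (induction k) (auto intro: int_adjoin_mult int_adjoin_1)

lemma int_adjoin_sum: "(\<And>i. i \<in> I \<Longrightarrow> f i \<in> int_adjoin z) \<Longrightarrow> sum f I \<in> int_adjoin z"
  by (induction I rule: infinite_finite_induct) (auto intro: int_adjoin_add int_adjoin_0)

lemmas int_adjoin_closed =
  int_adjoin_of_int int_adjoin_of_nat int_adjoin_numeral int_adjoin_0 int_adjoin_1 int_adjoin_self
  int_adjoin_add int_adjoin_mult int_adjoin_uminus int_adjoin_diff int_adjoin_power int_adjoin_sum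

lemma binomial_prime_expansion:
  fixes a b :: "'a::comm_ring_1"
  assumes "prime p"
  shows "(a + b) ^ p = a ^ p + b ^ p + of_nat p * a * b *
    (\<Sum>k = 1..<p. of_nat ((p choose k) div p) * a ^ (k - 1) * b ^ (p - k - 1))"
proof -
  have p2: "p \<ge> 2" using assms prime_ge_2_nat by blast
  have "{..p} = insert 0 (insert p {1..<p})" by auto
  then have "(a + b) ^ p = b ^ p + a ^ p + (\<Sum>k = 1..<p. of_nat (p choose k) * a ^ k * b ^ (p - k))"
    using p2 by (simp add: binomial_ring)
  also have "(\<Sum>k = 1..<p. of_nat (p choose k) * a ^ k * b ^ (p - k)) =
    (\<Sum>k = 1..<p. of_nat p * a * b * (of_nat ((p choose k) div p) * a ^ (k - 1) * b ^ (p - k - 1)))"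
  proof (rule sum.cong[OF refl])
    fix k assume k: "k \<in> {1..<p}"
    then have "p dvd (p choose k)" using assms by (intro dvd_choose_prime) auto
    then have "p choose k = p * ((p choose k) div p)" by simp
    moreover have "a ^ k = a * a ^ (k - 1)" "b ^ (p - k) = b * b ^ (p - k - 1)"
      using k by (simp_all add: Suc_diff_Suc flip: power_Suc)
    ultimately show "of_nat (p choose k) * a ^ k * b ^ (p - k) =
      of_nat p * a * b * (of_nat ((p choose k) div p) * a ^ (k - 1) * b ^ (p - k - 1))"
      by (metis (no_types, lifting) mult.assoc mult.left_commute of_nat_mult)
  qed
  finally show ?thesis by (simp add: sum_distrib_left algebra_simps)
qed

lemma power_prime_add_int_adjoin:
  assumes "prime p" "a \<in> int_adjoin z" "b \<in> int_adjoin z"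
  shows "\<exists>c\<in>int_adjoin z. (a + b) ^ p = a ^ p + b ^ p + of_nat p * a * b * c"
  using binomial_prime_expansion[OF assms(1), of a b] assms(2,3)
  by (intro bexI[of _ "\<Sum>k = 1..<p. of_nat ((p choose k) div p) * a ^ (k - 1) * b ^ (p - k - 1)"])
    (auto intro!: int_adjoin_closed)

lemma power_prime_power_add_int_adjoin:
  assumes p: "prime p" and ab: "a \<in> int_adjoin z" "b \<in> int_adjoin z"
  shows "\<exists>c\<in>int_adjoin z. (a + b) ^ (p ^ j) = a ^ (p ^ j) + b ^ (p ^ j) + of_nat p * a * b * c"
proof (induction j)
  case 0
  show ?case by (intro bexI[of _ 0]) (auto intro: int_adjoin_closed)
next
  case (Suc j)
  define q where "q = p ^ j"
  have "q \<ge> 1" unfolding q_def using p prime_gt_0_nat by (simp add: Suc_le_eq)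
  then have "x ^ q = x * x ^ (q - 1)" for x :: complex
    by (simp flip: power_Suc)
  then have factor: "of_nat p * a ^ q * b ^ q * c2 = of_nat p * a * b * (a ^ (q - 1) * b ^ (q - 1) * c2)"
    for c2 by (simp add: mult_ac)
  have power_q_p: "(x ^ q) ^ p = x ^ (p ^ Suc j)" for x :: complex
    unfolding q_def by (simp only: power_Suc2 power_mult)
  from Suc obtain c where c: "c \<in> int_adjoin z" "(a + b) ^ q = a ^ q + b ^ q + of_nat p * a * b * c"
    unfolding q_def by blast
  define A where "A = a ^ q + b ^ q"
  define E where "E = of_nat p * a * b * c"
  have AE: "A \<in> int_adjoin z" "E \<in> int_adjoin z"
    unfolding A_def E_def using ab c(1) by (auto intro!: int_adjoin_closed)
  obtain c1 where c1: "c1 \<in> int_adjoin z" "(A + E) ^ p = A ^ p + E ^ p + of_nat p * A * E * c1"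
    using power_prime_add_int_adjoin[OF p AE] by blast
  obtain c2 where c2: "c2 \<in> int_adjoin z"
      "A ^ p = (a ^ q) ^ p + (b ^ q) ^ p + of_nat p * a ^ q * b ^ q * c2"
    using power_prime_add_int_adjoin[OF p int_adjoin_power[OF ab(1)] int_adjoin_power[OF ab(2)]]
    unfolding A_def by blast
  have "x ^ p = x * x ^ (p - 1)" for x :: complex
    using p prime_gt_0_nat by (simp flip: power_Suc)
  then have Ep: "E ^ p = of_nat p * a * b * ((of_nat p * a * b) ^ (p - 1) * c ^ p)"
    unfolding E_def by (simp add: power_mult_distrib)
  define c' where "c' = a ^ (q - 1) * b ^ (q - 1) * c2 + (of_nat p * a * b) ^ (p - 1) * c ^ p
    + A * c * c1 * of_nat p"
  have "(a + b) ^ (p ^ Suc j) = (A + E) ^ p"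
    unfolding power_q_p[symmetric] c(2) A_def E_def ..
  also have "\<dots> = a ^ (p ^ Suc j) + b ^ (p ^ Suc j) + of_nat p * a * b * c'"
    unfolding c1(2) c2(2) Ep c'_def factor power_q_p by (simp add: E_def algebra_simps)
  finally show ?case
    using ab c(1) c1(1) c2(1) AE(1) unfolding c'_def by (auto intro!: int_adjoin_closed)
qed

lemma one_minus_power_odd_prime_power:
  assumes "prime p" "odd p" "x \<in> int_adjoin z"
  shows "\<exists>B\<in>int_adjoin z. (1 - x) ^ (p ^ j) = 1 - x ^ (p ^ j) + of_nat p * x * B"
proof -
  obtain c where c: "c \<in> int_adjoin z"
      "(1 + - x) ^ (p ^ j) = 1 ^ (p ^ j) + (- x) ^ (p ^ j) + of_nat p * 1 * (- x) * c"
    using power_prime_power_add_int_adjoin[OF assms(1) int_adjoin_1 int_adjoin_uminus[OF assms(3)]]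
    by blast
  have "(- x) ^ (p ^ j) = - (x ^ (p ^ j))"
    using assms(2) by simp
  with c show ?thesis by (intro bexI[of _ "- c"]) (auto intro: int_adjoin_closed)
qed

lemma power_prime_one_plus:
  assumes "prime p" "t \<in> int_adjoin z"
  shows "\<exists>w\<in>int_adjoin z. (t + 1) ^ p = t ^ p + 1 + of_nat p * t * (1 + t * w)"
proof -
  define w where "w = (\<Sum>k = 2..<p. of_nat ((p choose k) div p) * t ^ (k - 2))"
  have "(\<Sum>k = 2..<p. of_nat ((p choose k) div p) * t ^ (k - 1)) = t * w"
    unfolding w_def sum_distrib_left
  proof (rule sum.cong[OF refl])
    fix k assume "k \<in> {2..<p}"
    then have "k - 1 = Suc (k - 2)" by auto
    then have "t ^ (k - 1) = t * t ^ (k - 2)" by simp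
    then show "of_nat ((p choose k) div p) * t ^ (k - 1) = t * (of_nat ((p choose k) div p) * t ^ (k - 2))"
      by simp
  qed
  moreover have "{1..<p} = insert 1 {2..<p}" "p > 0"
    using prime_ge_2_nat[OF assms(1)] by auto
  ultimately have "(\<Sum>k = 1..<p. of_nat ((p choose k) div p) * t ^ (k - 1) * 1 ^ (p - k - 1)) = 1 + t * w"
    by (subst \<open>{1..<p} = _\<close>, subst sum.insert) auto
  moreover have "w \<in> int_adjoin z"
    unfolding w_def using assms(2) by (auto intro!: int_adjoin_closed)
  ultimately show ?thesis
    using binomial_prime_expansion[OF assms(1), of t 1] by auto
qed

lemma one_plus_unit_of_power_eq:
  assumes "even k" "T \<in> int_adjoin z" "w \<in> int_adjoin z" "P \<in> int_adjoin z"
    and T: "T ^ k = - P * (1 + T * w)"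
  shows "\<exists>u\<in>int_adjoin z. (1 + T * w) * u = 1"
proof -
  define S where "S = (\<Sum>i<k. (- (T * w)) ^ i)"
  have "1 - (- (T * w)) ^ k = (1 - (- (T * w))) * S"
    unfolding S_def by (rule one_diff_power_eq)
  then have "(1 + T * w) * (S - P * w ^ k) = 1"
    using \<open>even k\<close> by (simp add: power_mult_distrib T algebra_simps)
  moreover have "S - P * w ^ k \<in> int_adjoin z"
    unfolding S_def using assms(2-4) by (auto intro!: int_adjoin_closed)
  ultimately show ?thesis by blast
qed

lemma odd_prime_root_of_unity_minus_one:
  assumes p: "prime p" "odd p" and T: "T \<in> int_adjoin z" "T \<noteq> 0" "(T + 1) ^ p = 1"
  obtains w u where "w \<in> int_adjoin z" "u \<in> int_adjoin z"
    "T ^ (p - 1) = - of_nat p * (1 + T * w)" "of_nat p = T ^ (p - 1) * u"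
proof -
  obtain w where w: "w \<in> int_adjoin z" "(T + 1) ^ p = T ^ p + 1 + of_nat p * T * (1 + T * w)"
    using power_prime_one_plus[OF p(1) T(1)] by blast
  have "T ^ p = T * T ^ (p - 1)"
    using prime_gt_0_nat[OF p(1)] by (simp flip: power_Suc)
  then have "T * (T ^ (p - 1) + of_nat p * (1 + T * w)) = 0"
    using w(2) T(3) by (simp add: algebra_simps)
  then have Tp: "T ^ (p - 1) = - of_nat p * (1 + T * w)"
    using T(2) by (simp add: add_eq_0_iff)
  obtain v where v: "v \<in> int_adjoin z" "(1 + T * w) * v = 1"
    using one_plus_unit_of_power_eq[OF _ T(1) w(1) int_adjoin_of_nat Tp] p(2) by auto
  have "of_nat p = of_nat p * ((1 + T * w) * v)"
    using v(2) by simp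
  also have "\<dots> = T ^ (p - 1) * - v"
    using Tp by simp
  finally show thesis
    by (rule that[OF w(1) int_adjoin_uminus[OF v(1)] Tp])
qed

text \<open>
  If \<open>\<pi>^a\<close> divides \<open>P\<close>, then \<open>\<pi>^(min m (a+1))\<close> divides \<open>T\<close>, so \<open>\<pi>^(k * min m (a+1))\<close>
  divides \<open>P\<close>; this exponent exceeds \<open>a\<close> as long as \<open>a < m k\<close>.
\<close>
lemma power_factor_bootstrap:
  assumes Z: "\<pi> \<in> int_adjoin z" "c \<in> int_adjoin z" "B \<in> int_adjoin z" "u \<in> int_adjoin z"
      "P \<in> int_adjoin z"
    and "k \<ge> 1" and T: "T = \<pi> ^ m * c + P * \<pi> * B" and P: "P = T ^ k * u"
  shows "a \<le> m * k \<Longrightarrow> \<exists>x\<in>int_adjoin z. P = \<pi> ^ a * x"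
proof (induction a)
  case 0
  show ?case using Z(5) by auto
next
  case (Suc a)
  then obtain x where x: "x \<in> int_adjoin z" "P = \<pi> ^ a * x" by auto
  define j where "j = min m (Suc a)"
  define y where "y = \<pi> ^ (m - j) * c + \<pi> ^ (Suc a - j) * x * B"
  have "T = \<pi> ^ j * y"
    unfolding T x(2) y_def j_def by (simp add: algebra_simps flip: power_add)
  then have "P = \<pi> ^ (j * k) * (y ^ k * u)"
    by (simp add: P power_mult_distrib power_mult)
  moreover have "Suc a \<le> j * k"
    using Suc.prems mult_le_mono2[OF \<open>k \<ge> 1\<close>, of "Suc a"] unfolding j_def
    by (cases "m \<le> Suc a") auto
  ultimately have "P = \<pi> ^ Suc a * (\<pi> ^ (j * k - Suc a) * (y ^ k * u))"
    by (metis (no_types, lifting) le_add_diff_inverse mult.assoc power_add)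
  moreover have "\<pi> ^ (j * k - Suc a) * (y ^ k * u) \<in> int_adjoin z"
    unfolding y_def using Z x(1) by (auto intro!: int_adjoin_closed)
  ultimately show ?case by blast
qed

lemma power_Suc_add_first_order:
  assumes "a \<in> int_adjoin z" "b \<in> int_adjoin z"
  shows "\<exists>h\<in>int_adjoin z. (a + b) ^ Suc k = b ^ Suc k + of_nat (Suc k) * a * b ^ k + a\<^sup>2 * h"
proof (induction k)
  case 0
  show ?case by (intro bexI[of _ 0]) (auto intro: int_adjoin_closed)
next
  case (Suc k)
  then obtain h where h: "h \<in> int_adjoin z"
      "(a + b) ^ Suc k = b ^ Suc k + of_nat (Suc k) * a * b ^ k + a\<^sup>2 * h"
    by blast
  have "(a + b) ^ Suc (Suc k) = (a + b) * (b ^ Suc k + of_nat (Suc k) * a * b ^ k + a\<^sup>2 * h)"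
    using h(2) by simp
  also have "\<dots> = b ^ Suc (Suc k) + of_nat (Suc (Suc k)) * a * b ^ Suc k
      + a\<^sup>2 * (b * h + of_nat (Suc k) * b ^ k + a * h)"
    by (simp add: algebra_simps power2_eq_square)
  finally show ?case
    using h(1) assms by (auto intro!: int_adjoin_closed)
qed

lemma power_diff_even_first_order:
  assumes "even q" "D \<in> int_adjoin z" "y \<in> int_adjoin z"
  shows "\<exists>h\<in>int_adjoin z.
    (D - y) ^ (q + 2) = y ^ (q + 2) - of_nat (q + 2) * D * y ^ (q + 1) + D\<^sup>2 * h"
proof -
  obtain h where h: "h \<in> int_adjoin z" "(D + - y) ^ Suc (q + 1) =
      (- y) ^ Suc (q + 1) + of_nat (Suc (q + 1)) * D * (- y) ^ (q + 1) + D\<^sup>2 * h"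
    using power_Suc_add_first_order[OF assms(2) int_adjoin_uminus[OF assms(3)]] by blast
  moreover have "(- y) ^ Suc (q + 1) = y ^ (q + 2)" "(- y) ^ (q + 1) = - (y ^ (q + 1))"
    using \<open>even q\<close> by simp_all
  ultimately show ?thesis by auto
qed

lemma power_totient_plus_prime:
  assumes p: "odd p" "p \<ge> 3"
    and Z: "\<pi> \<in> int_adjoin z" "B \<in> int_adjoin z" "w \<in> int_adjoin z" "e \<in> int_adjoin z"
    and T: "T = - (\<pi> ^ m) + of_nat p * \<pi> * B"
    and Tp: "T ^ (p - 1) = - of_nat p * (1 + T * w)"
    and e: "of_nat p = \<pi> ^ (m * (p - 1)) * e"
  shows "\<exists>x\<in>int_adjoin z. \<pi> ^ (m * (p - 1)) + of_nat p = \<pi> ^ (p * m) * x"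
proof -
  obtain q where q: "p = q + 3" using p(2) by (metis add.commute le_Suc_ex)
  have "even q" using p(1) q by simp
  define P where "P = (of_nat p :: complex)"
  define D where "D = P * \<pi> * B"
  obtain h where h: "h \<in> int_adjoin z" "(D - \<pi> ^ m) ^ (q + 2) =
      (\<pi> ^ m) ^ (q + 2) - of_nat (q + 2) * D * (\<pi> ^ m) ^ (q + 1) + D\<^sup>2 * h"
    using power_diff_even_first_order[OF \<open>even q\<close>, of D z "\<pi> ^ m"] Z
    unfolding D_def P_def by (auto intro!: int_adjoin_closed)
  have "T = D - \<pi> ^ m" "p - 1 = q + 2"
    unfolding T D_def P_def q by simp_all
  with h(2) have expand:
    "T ^ (p - 1) = \<pi> ^ (m * (q + 2)) - of_nat (q + 2) * D * \<pi> ^ (m * (q + 1)) + D\<^sup>2 * h"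
    by (simp only: power_mult)
  define X where "X = w - \<pi> ^ (m * (q + 1) + 1) * e * B * w
      + of_nat (q + 2) * B * \<pi> ^ (m * q + 1) - \<pi> ^ (m * (q + 1) + 2) * e * B\<^sup>2 * h"
  have "\<pi> ^ (m * (q + 2)) + P =
      T ^ (p - 1) + of_nat (q + 2) * D * \<pi> ^ (m * (q + 1)) - D\<^sup>2 * h + P"
    unfolding expand by simp
  also have "\<dots> = - P * (T * w) + of_nat (q + 2) * D * \<pi> ^ (m * (q + 1)) - D\<^sup>2 * h"
    unfolding Tp P_def by (simp add: algebra_simps)
  also have "\<dots> = P * \<pi> ^ m * w - (P * P * \<pi>) * B * w
      + of_nat (q + 2) * P * B * (\<pi> ^ (m * (q + 1)) * \<pi>) - (P * P * \<pi>\<^sup>2) * B\<^sup>2 * h"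
    unfolding T D_def P_def[symmetric] by (simp add: algebra_simps power2_eq_square)
  also have "\<dots> = P * \<pi> ^ m * X"
  proof -
    have f: "P * P * \<pi> = P * \<pi> ^ m * (\<pi> ^ (m * (q + 1) + 1) * e)"
      "P * P * \<pi>\<^sup>2 = P * \<pi> ^ m * (\<pi> ^ (m * (q + 1) + 2) * e)"
      "\<pi> ^ (m * (q + 1)) * \<pi> = \<pi> ^ m * \<pi> ^ (m * q + 1)"
      using e unfolding P_def q by (simp_all add: algebra_simps flip: power_add)
    show ?thesis unfolding f X_def by (simp add: algebra_simps)
  qed
  also have "P * \<pi> ^ m = \<pi> ^ (p * m) * e"
  proof -
    have "P = \<pi> ^ (m * (q + 2)) * e" "p * m = m * (q + 2) + m"
      using e unfolding P_def q by (simp_all add: algebra_simps)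
    then show ?thesis by (simp only: power_add mult_ac)
  qed
  finally have "\<pi> ^ (m * (p - 1)) + of_nat p = \<pi> ^ (p * m) * (e * X)"
    unfolding P_def q by (simp add: mult.assoc)
  moreover have "e * X \<in> int_adjoin z"
    unfolding X_def using Z h(1) by (auto intro!: int_adjoin_closed)
  ultimately show ?thesis by blast
qed

theorem lemma5p10:
  fixes p n :: nat and \<mu> :: complex
  assumes "prime p" and "odd p" and "n \<ge> 2"
    and "primitive_root_of_unity (p ^ n) \<mu>"
  shows "cong_in_int_adjoin \<mu> ((1 - \<mu>) ^ (p ^ n - p ^ (n - 1))) (- of_nat p) ((1 - \<mu>) ^ (p ^ n))"
proof -
  define \<pi> where "\<pi> = 1 - \<mu>"
  define m where "m = p ^ (n - 1)"
  define T where "T = \<mu> ^ m - 1"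
  have "p \<ge> 3"
    using prime_ge_2_nat[OF assms(1)] assms(2) by presburger
  have pn: "p ^ n = p * m"
    unfolding m_def using assms(3) by (simp flip: power_Suc)
  have totient: "p ^ n - p ^ (n - 1) = m * (p - 1)"
    unfolding pn m_def[symmetric] by (simp add: diff_mult_distrib2 mult.commute)
  have \<pi>: "\<pi> \<in> int_adjoin \<mu>" unfolding \<pi>_def by (auto intro!: int_adjoin_closed)
  obtain B where B: "B \<in> int_adjoin \<mu>" "T = - (\<pi> ^ m) + of_nat p * \<pi> * B"
    using one_minus_power_odd_prime_power[OF assms(1,2) \<pi>, of "n - 1"]
    unfolding T_def \<pi>_def m_def by auto
  have "\<mu> ^ (m * p) = 1" "\<mu> ^ m \<noteq> 1"
    using assms(4) pn \<open>p \<ge> 3\<close> unfolding primitive_root_of_unity_def by (auto simp: mult.commute)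
  then have T: "T \<in> int_adjoin \<mu>" "T \<noteq> 0" "(T + 1) ^ p = 1"
    unfolding T_def by (auto intro!: int_adjoin_closed simp: power_mult)
  obtain w u where wu: "w \<in> int_adjoin \<mu>" "u \<in> int_adjoin \<mu>"
    "T ^ (p - 1) = - of_nat p * (1 + T * w)" "of_nat p = T ^ (p - 1) * u"
    using odd_prime_root_of_unity_minus_one[OF assms(1,2) T] .
  obtain e where e: "e \<in> int_adjoin \<mu>" "of_nat p = \<pi> ^ (m * (p - 1)) * e"
    using power_factor_bootstrap[OF \<pi> int_adjoin_uminus[OF int_adjoin_1] B(1) wu(2) int_adjoin_of_nat
        _ _ wu(4) order.refl] B(2) \<open>p \<ge> 3\<close> by fastforce
  obtain x where "x \<in> int_adjoin \<mu>" "\<pi> ^ (m * (p - 1)) + of_nat p = \<pi> ^ (p * m) * x"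
    using power_totient_plus_prime[OF assms(2) \<open>p \<ge> 3\<close> \<pi> B(1) wu(1) e(1) B(2) wu(3) e(2)] by blast
  then show ?thesis
    unfolding cong_in_int_adjoin_def totient unfolding pn \<pi>_def[symmetric] by auto
qed

end
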